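(* Let $(X,\tau)$ be a topological space, $\delta$ a quasi-proximity compatible with $\tau$ such that $\mathcal{V}_\delta$ is transitive, and $\mathcal{B}=\mathcal{B}(\mathcal{V}_\delta)$. Then there exists $\mathcal{V}\in\pi(\delta)\cap T(\tau)$ with $\mathcal{V}\neq\mathcal{V}_\delta$ if and only if at least one of the following holds: (1) there are sets $N_i\in\mathcal{B}$ ($i\in\mathbb{N}$) with $N_i\subsetneq N_{i+1}$ for all $i$ and $\bigcup_{i=1}^\infty N_i\in\mathcal{B}$; (2) there are sets $N_i\in\mathcal{B}$ ($i\in\mathbb{N}$) with $N_{i+1}\subsetneq N_i$ for all $i$ and $\bigcap_{i=1}^\infty N_i\in\mathcal{B}$.
   Context: Quasi-uniformities and quasi-proximities are in the sense of Fletcher–Lindgren; compatible means inducing the topology $\tau$. $T(\tau)$ is the set of compatible transitive quasi-uniformities on $(X,\tau)$ (transitive = having a base of transitive entourages). $\pi(\delta)$ is the set of quasi-uniformities inducing $\delta$, and $\mathcal{V}_\delta$ its coarsest (totally bounded) element. For $N\subseteq X$, $U_N=(N\times N)\cup((X\setminus N)\times X)$ and $\mathcal{B}(\mathcal{V}_\delta)=\{N\in\tau:U_N\in\mathcal{V}_\delta\}$, which is an l-base: a base of $\tau$ closed under finite unions and intersections containing $\emptyset,X$. *)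

theory Defs
  imports "HOL-Analysis.Analysis"
begin

definition quasi_uniformity :: "'a set \<Rightarrow> ('a \<times> 'a) set set \<Rightarrow> bool" where
  "quasi_uniformity X \<U> \<longleftrightarrow>
     \<U> \<noteq> {} \<and>
     (\<forall>U\<in>\<U>. U \<subseteq> X \<times> X \<and> Id_on X \<subseteq> U) \<and>
     (\<forall>U W. U \<in> \<U> \<and> U \<subseteq> W \<and> W \<subseteq> X \<times> X \<longrightarrow> W \<in> \<U>) \<and>
     (\<forall>U\<in>\<U>. \<forall>V\<in>\<U>. U \<inter> V \<in> \<U>) \<and>
     (\<forall>U\<in>\<U>. \<exists>V\<in>\<U>. V O V \<subseteq> U)"

definition qu_compatible :: "'a topology \<Rightarrow> ('a \<times> 'a) set set \<Rightarrow> bool" where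
  "qu_compatible T \<U> \<longleftrightarrow>
     (\<forall>G. openin T G \<longleftrightarrow> G \<subseteq> topspace T \<and> (\<forall>x\<in>G. \<exists>U\<in>\<U>. U `` {x} \<subseteq> G))"

definition qu_transitive :: "('a \<times> 'a) set set \<Rightarrow> bool" where
  "qu_transitive \<U> \<longleftrightarrow> (\<forall>U\<in>\<U>. \<exists>V\<in>\<U>. trans V \<and> V \<subseteq> U)"

definition quasi_proximity :: "'a set \<Rightarrow> ('a set \<Rightarrow> 'a set \<Rightarrow> bool) \<Rightarrow> bool" where
  "quasi_proximity X \<delta> \<longleftrightarrow>
     (\<forall>A B. \<delta> A B \<longrightarrow> A \<subseteq> X \<and> B \<subseteq> X) \<and>
     (\<forall>A B C. A \<subseteq> X \<and> B \<subseteq> X \<and> C \<subseteq> X \<longrightarrow>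
        (\<delta> A (B \<union> C) \<longleftrightarrow> \<delta> A B \<or> \<delta> A C) \<and>
        (\<delta> (A \<union> B) C \<longleftrightarrow> \<delta> A C \<or> \<delta> B C)) \<and>
     (\<forall>A B. \<delta> A B \<longrightarrow> A \<noteq> {} \<and> B \<noteq> {}) \<and>
     (\<forall>A B. A \<subseteq> X \<and> B \<subseteq> X \<and> A \<inter> B \<noteq> {} \<longrightarrow> \<delta> A B) \<and>
     (\<forall>A B. A \<subseteq> X \<and> B \<subseteq> X \<and> \<not> \<delta> A B \<longrightarrow>
        (\<exists>C. C \<subseteq> X \<and> \<not> \<delta> A C \<and> \<not> \<delta> (X - C) B))"

definition qp_compatible :: "'a topology \<Rightarrow> ('a set \<Rightarrow> 'a set \<Rightarrow> bool) \<Rightarrow> bool" where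
  "qp_compatible T \<delta> \<longleftrightarrow>
     (\<forall>G. openin T G \<longleftrightarrow> G \<subseteq> topspace T \<and> (\<forall>x\<in>G. \<not> \<delta> {x} (topspace T - G)))"

definition qu_proximity :: "'a set \<Rightarrow> ('a \<times> 'a) set set \<Rightarrow> 'a set \<Rightarrow> 'a set \<Rightarrow> bool" where
  "qu_proximity X \<U> A B \<longleftrightarrow>
     A \<subseteq> X \<and> B \<subseteq> X \<and> (\<forall>U\<in>\<U>. (A \<times> B) \<inter> U \<noteq> {})"

definition qu_pi :: "'a set \<Rightarrow> ('a set \<Rightarrow> 'a set \<Rightarrow> bool) \<Rightarrow> ('a \<times> 'a) set set set" where
  "qu_pi X \<delta> = {\<U>. quasi_uniformity X \<U> \<and> qu_proximity X \<U> = \<delta>}"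

definition qu_T :: "'a topology \<Rightarrow> ('a \<times> 'a) set set set" where
  "qu_T T = {\<U>. quasi_uniformity (topspace T) \<U> \<and> qu_compatible T \<U> \<and> qu_transitive \<U>}"

definition S_ent :: "'a set \<Rightarrow> 'a set \<Rightarrow> 'a set \<Rightarrow> ('a \<times> 'a) set" where
  "S_ent X A B = ((X - A) \<times> X) \<union> (X \<times> (X - B))"

text \<open>V_delta: the quasi-uniformity generated by the subbase of all S_ent X A B with
A far from B (the coarsest element of pi(delta)).\<close>
definition V_delta :: "'a set \<Rightarrow> ('a set \<Rightarrow> 'a set \<Rightarrow> bool) \<Rightarrow> ('a \<times> 'a) set set" where
  "V_delta X \<delta> = {U. U \<subseteq> X \<times> X \<and>
     (\<exists>F. finite F \<and> F \<subseteq> {(A, B). A \<subseteq> X \<and> B \<subseteq> X \<and> \<not> \<delta> A B} \<and>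
          (X \<times> X) \<inter> (\<Inter>(A, B)\<in>F. S_ent X A B) \<subseteq> U)}"

definition U_N :: "'a set \<Rightarrow> 'a set \<Rightarrow> ('a \<times> 'a) set" where
  "U_N X N = (N \<times> N) \<union> ((X - N) \<times> X)"

definition lbase :: "'a topology \<Rightarrow> ('a \<times> 'a) set set \<Rightarrow> 'a set set" where
  "lbase T \<V> = {N. openin T N \<and> U_N (topspace T) N \<in> \<V>}"

end

theory Submission
  imports Defs "HOL-Library.Ramsey"
begin

text \<open>
  A compatible transitive quasi-uniformity V in pi(delta) strictly finer than V_delta contains a
  transitive entourage R outside V_delta. Every R-up-closed set lies in the l-base, and if there
  were only finitely many images R[x] then R would contain a finite intersection of the basic
  entourages of V_delta determined by these far pairs (R[x], X - R[x]), forcing R into V_delta.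
  So there are infinitely many distinct principal up-sets, and Ramsey's theorem turns them into a
  strictly increasing or decreasing sequence of up-sets; unions and intersections of up-sets are
  again up-sets.

  Conversely, a chain N_i as in (1) or (2) defines the transitive relation W, the intersection of
  the entourages U_(N_i). Adjoining W to V_delta gives a transitive quasi-uniformity that is not
  V_delta, since W is not in V_delta by a pigeonhole argument on the finitely many images of a
  basic entourage. It still induces tau because every point has a smallest open set among the
  N_i, their limit and X containing it, and it still induces delta: for A near B, pairs in A x B
  chosen in ever smaller finite intersections of V_delta-entourages can, by the same pigeonhole
  argument, be recombined into a single pair lying in W.
\<close>

section \<open>Basic entourages of V_delta\<close>

definition far_pairs :: "'a set \<Rightarrow> ('a set \<Rightarrow> 'a set \<Rightarrow> bool) \<Rightarrow> ('a set \<times> 'a set) set" where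
  "far_pairs X \<delta> = {(A, B). A \<subseteq> X \<and> B \<subseteq> X \<and> \<not> \<delta> A B}"

definition S_ent_Inter :: "'a set \<Rightarrow> ('a set \<times> 'a set) set \<Rightarrow> ('a \<times> 'a) set" where
  "S_ent_Inter X F = (X \<times> X) \<inter> (\<Inter>(A, B)\<in>F. S_ent X A B)"

lemma mem_far_pairs [simp]: "(A, B) \<in> far_pairs X \<delta> \<longleftrightarrow> A \<subseteq> X \<and> B \<subseteq> X \<and> \<not> \<delta> A B"
  by (simp add: far_pairs_def)

lemma mem_S_ent_Inter:
  "(a, b) \<in> S_ent_Inter X F \<longleftrightarrow> a \<in> X \<and> b \<in> X \<and> (\<forall>(A, B)\<in>F. a \<in> A \<longrightarrow> b \<notin> B)"
  unfolding S_ent_Inter_def S_ent_def by auto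

lemma S_ent_Inter_subset: "S_ent_Inter X F \<subseteq> X \<times> X"
  unfolding S_ent_Inter_def by blast

lemma S_ent_Inter_Un: "S_ent_Inter X (F \<union> F') = S_ent_Inter X F \<inter> S_ent_Inter X F'"
  unfolding S_ent_Inter_def by blast

lemma Image_S_ent_Inter:
  "a \<in> X \<Longrightarrow> S_ent_Inter X F `` {a} = X - \<Union>(snd ` {p \<in> F. a \<in> fst p})"
  by (auto simp: mem_S_ent_Inter)

lemma finite_Images_S_ent_Inter: "finite F \<Longrightarrow> finite ((\<lambda>a. S_ent_Inter X F `` {a}) ` X)"
proof -
  assume "finite F"
  have "(\<lambda>a. S_ent_Inter X F `` {a}) ` X \<subseteq> (\<lambda>K. X - \<Union>(snd ` K)) ` Pow F"
    by (auto simp: Image_S_ent_Inter)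
  then show ?thesis
    using \<open>finite F\<close> finite_subset by blast
qed

lemma V_delta_iff:
  "U \<in> V_delta X \<delta> \<longleftrightarrow>
     U \<subseteq> X \<times> X \<and> (\<exists>F. finite F \<and> F \<subseteq> far_pairs X \<delta> \<and> S_ent_Inter X F \<subseteq> U)"
  unfolding V_delta_def S_ent_Inter_def far_pairs_def by simp

lemma V_delta_subset: "U \<in> V_delta X \<delta> \<Longrightarrow> U \<subseteq> X \<times> X"
  by (simp add: V_delta_iff)

lemma V_delta_mono: "U \<in> V_delta X \<delta> \<Longrightarrow> U \<subseteq> U' \<Longrightarrow> U' \<subseteq> X \<times> X \<Longrightarrow> U' \<in> V_delta X \<delta>"
  unfolding V_delta_iff by blast

lemma S_ent_Inter_in_V_delta:
  "finite F \<Longrightarrow> F \<subseteq> far_pairs X \<delta> \<Longrightarrow> S_ent_Inter X F \<in> V_delta X \<delta>"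
  unfolding V_delta_iff using S_ent_Inter_subset by blast

lemma V_delta_Int: "U \<in> V_delta X \<delta> \<Longrightarrow> U' \<in> V_delta X \<delta> \<Longrightarrow> U \<inter> U' \<in> V_delta X \<delta>"
proof -
  assume "U \<in> V_delta X \<delta>" "U' \<in> V_delta X \<delta>"
  then obtain F F' where "finite F" "F \<subseteq> far_pairs X \<delta>" "S_ent_Inter X F \<subseteq> U"
    and "finite F'" "F' \<subseteq> far_pairs X \<delta>" "S_ent_Inter X F' \<subseteq> U'" "U \<subseteq> X \<times> X"
    unfolding V_delta_iff by blast
  then show ?thesis
    unfolding V_delta_iff by (intro conjI exI[of _ "F \<union> F'"]) (auto simp: S_ent_Inter_Un)
qed

lemma V_delta_top: "X \<times> X \<in> V_delta X \<delta>"
  using S_ent_Inter_in_V_delta[of "{}" X \<delta>] by (simp add: S_ent_Inter_def)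

lemma U_N_in_V_delta: "N \<subseteq> X \<Longrightarrow> \<not> \<delta> N (X - N) \<Longrightarrow> U_N X N \<in> V_delta X \<delta>"
proof -
  assume "N \<subseteq> X" "\<not> \<delta> N (X - N)"
  then have "S_ent_Inter X {(N, X - N)} \<in> V_delta X \<delta>"
    by (intro S_ent_Inter_in_V_delta) auto
  moreover have "S_ent_Inter X {(N, X - N)} \<subseteq> U_N X N" "U_N X N \<subseteq> X \<times> X"
    using \<open>N \<subseteq> X\<close> by (auto simp: U_N_def mem_S_ent_Inter)
  ultimately show "U_N X N \<in> V_delta X \<delta>"
    by (rule V_delta_mono)
qed

lemma in_V_delta_if_finite_Images:
  assumes "Id_on X \<subseteq> R" "R \<subseteq> X \<times> X" "finite ((\<lambda>x. R `` {x}) ` X)"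
    and "\<And>x. x \<in> X \<Longrightarrow> \<not> \<delta> (R `` {x}) (X - R `` {x})"
  shows "R \<in> V_delta X \<delta>"
proof -
  define F where "F = (\<lambda>N. (N, X - N)) ` (\<lambda>x. R `` {x}) ` X"
  have "finite F"
    using assms(3) unfolding F_def by (rule finite_imageI)
  moreover have "F \<subseteq> far_pairs X \<delta>"
    using assms(2,4) unfolding F_def by auto
  moreover have "S_ent_Inter X F \<subseteq> R"
  proof (clarify)
    fix a b assume "(a, b) \<in> S_ent_Inter X F"
    then have "a \<in> X" "b \<in> X" "a \<in> R `` {a} \<longrightarrow> b \<notin> X - R `` {a}"
      unfolding mem_S_ent_Inter F_def by auto
    then show "(a, b) \<in> R"
      using assms(1) by (auto simp: Id_on_def)
  qed
  ultimately show ?thesis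
    using assms(2) unfolding V_delta_iff by blast
qed

lemma V_delta_finite_Images:
  assumes "U \<in> V_delta X \<delta>"
  obtains R where "R \<in> V_delta X \<delta>" "R \<subseteq> U" "finite ((\<lambda>a. R `` {a}) ` X)"
proof -
  obtain F where "finite F" "F \<subseteq> far_pairs X \<delta>" "S_ent_Inter X F \<subseteq> U"
    using assms unfolding V_delta_iff by blast
  then show ?thesis
    using that finite_Images_S_ent_Inter S_ent_Inter_in_V_delta by blast
qed

section \<open>V_delta induces the quasi-proximity\<close>

context
  fixes X :: "'a set" and \<delta> :: "'a set \<Rightarrow> 'a set \<Rightarrow> bool"
  assumes qp: "quasi_proximity X \<delta>"
begin

lemmas qp_axioms = qp[unfolded quasi_proximity_def]

lemma qp_subset: "\<delta> A B \<Longrightarrow> A \<subseteq> X \<and> B \<subseteq> X"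
  using qp_axioms[THEN conjunct1] by blast

lemma qp_Un_right: "A \<subseteq> X \<Longrightarrow> B \<subseteq> X \<Longrightarrow> C \<subseteq> X \<Longrightarrow> \<delta> A (B \<union> C) \<longleftrightarrow> \<delta> A B \<or> \<delta> A C"
  using qp_axioms[THEN conjunct2, THEN conjunct1] by blast

lemma qp_Un_left: "A \<subseteq> X \<Longrightarrow> B \<subseteq> X \<Longrightarrow> C \<subseteq> X \<Longrightarrow> \<delta> (A \<union> B) C \<longleftrightarrow> \<delta> A C \<or> \<delta> B C"
  using qp_axioms[THEN conjunct2, THEN conjunct1] by blast

lemma qp_nonempty: "\<delta> A B \<Longrightarrow> A \<noteq> {} \<and> B \<noteq> {}"
  using qp_axioms[THEN conjunct2, THEN conjunct2, THEN conjunct1] by blast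

lemma qp_Int: "A \<subseteq> X \<Longrightarrow> B \<subseteq> X \<Longrightarrow> A \<inter> B \<noteq> {} \<Longrightarrow> \<delta> A B"
  using qp_axioms[THEN conjunct2, THEN conjunct2, THEN conjunct2, THEN conjunct1] by blast

lemma qp_mono: "\<delta> A B \<Longrightarrow> A \<subseteq> A' \<Longrightarrow> A' \<subseteq> X \<Longrightarrow> B \<subseteq> B' \<Longrightarrow> B' \<subseteq> X \<Longrightarrow> \<delta> A' B'"
proof -
  assume "\<delta> A B" "A \<subseteq> A'" "A' \<subseteq> X" "B \<subseteq> B'" "B' \<subseteq> X"
  moreover from this have "\<delta> A' B"
    using qp_Un_left[of A A' B] qp_subset by (auto simp: subset_Un_eq)
  ultimately show "\<delta> A' B'"
    using qp_Un_right[of A' B B'] qp_subset by (auto simp: subset_Un_eq)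
qed

lemma far_if_disjoint_S_ent_Inter:
  assumes "finite F" "F \<subseteq> far_pairs X \<delta>"
  shows "A \<subseteq> X \<Longrightarrow> B \<subseteq> X \<Longrightarrow> (A \<times> B) \<inter> S_ent_Inter X F = {} \<Longrightarrow> \<not> \<delta> A B"
  using assms
proof (induction F arbitrary: A B rule: finite_induct)
  case empty
  then have "A = {} \<or> B = {}"
    unfolding S_ent_Inter_def by auto
  then show ?case
    using qp_nonempty by auto
next
  case (insert p F)
  obtain A' B' where p: "p = (A', B')" by (cases p)
  have far: "A' \<subseteq> X" "B' \<subseteq> X" "\<not> \<delta> A' B'" and F: "F \<subseteq> far_pairs X \<delta>"
    using insert.prems(4) by (auto simp: p)
  have "(A \<times> B) \<inter> S_ent_Inter X F \<subseteq> A' \<times> B'"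
    using insert.prems(3) by (auto simp: mem_S_ent_Inter p)
  \<comment> \<open>split A along A' and B along B': only the corner inside A' \<times> B' escapes the IH\<close>
  then have "\<not> \<delta> (A - A') B" "\<not> \<delta> (A \<inter> A') (B - B')"
    using insert.prems(1,2) by (intro insert.IH[OF _ _ _ F]; blast)+
  moreover have "\<not> \<delta> (A \<inter> A') (B \<inter> B')"
    using far(3) qp_mono[OF _ Int_lower2 far(1) Int_lower2 far(2)] by blast
  moreover have "A \<inter> A' \<subseteq> X" "A - A' \<subseteq> X" "B - B' \<subseteq> X" "B \<inter> B' \<subseteq> X"
    using insert.prems(1,2) by blast+
  ultimately have "\<not> \<delta> (A \<inter> A') B"
    using qp_Un_right[of "A \<inter> A'" "B - B'" "B \<inter> B'"] insert.prems(1,2) by (simp add: Un_Diff_Int)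
  then show ?case
    using \<open>\<not> \<delta> (A - A') B\<close> \<open>A \<inter> A' \<subseteq> X\<close> \<open>A - A' \<subseteq> X\<close> insert.prems(2)
      qp_Un_left[of "A - A'" "A \<inter> A'" B]
    by (simp add: Un_Diff_Int)
qed

lemma V_delta_meets_near: "\<delta> A B \<Longrightarrow> U \<in> V_delta X \<delta> \<Longrightarrow> (A \<times> B) \<inter> U \<noteq> {}"
proof
  assume "\<delta> A B" "U \<in> V_delta X \<delta>" "(A \<times> B) \<inter> U = {}"
  then obtain F where "finite F" "F \<subseteq> far_pairs X \<delta>" "S_ent_Inter X F \<subseteq> U"
    unfolding V_delta_iff by blast
  then show False
    using far_if_disjoint_S_ent_Inter[of F A B] qp_subset \<open>\<delta> A B\<close> \<open>(A \<times> B) \<inter> U = {}\<close> by blast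
qed

lemma V_delta_refl: "U \<in> V_delta X \<delta> \<Longrightarrow> Id_on X \<subseteq> U"
proof
  fix z assume U: "U \<in> V_delta X \<delta>" and "z \<in> Id_on X"
  then obtain x where x: "z = (x, x)" "x \<in> X"
    by (auto simp: Id_on_def)
  then have "\<delta> {x} {x}"
    by (intro qp_Int) auto
  then have "({x} \<times> {x}) \<inter> U \<noteq> {}"
    using U by (rule V_delta_meets_near)
  then show "z \<in> U"
    using x by simp
qed

lemma far_complement_Image_V_delta:
  "U \<in> V_delta X \<delta> \<Longrightarrow> \<not> \<delta> {x} (X - U `` {x})"
  using V_delta_meets_near[of "{x}" "X - U `` {x}" U] by blast

lemma V_delta_identifies_two:
  assumes "U \<in> V_delta X \<delta>" "\<And>i. p i \<in> X"
  obtains i j :: nat where "i < j" "(p i, p j) \<in> U" "(p j, p i) \<in> U"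
proof -
  obtain R where R: "R \<in> V_delta X \<delta>" "R \<subseteq> U" "finite ((\<lambda>a. R `` {a}) ` X)"
    using assms(1) by (rule V_delta_finite_Images)
  have "range (\<lambda>i. R `` {p i}) \<subseteq> (\<lambda>a. R `` {a}) ` X"
    using assms(2) by auto
  then have "\<not> inj (\<lambda>i. R `` {p i})"
    using R(3) finite_subset finite_imageD infinite_UNIV_nat by blast
  then obtain i j where ij: "i < j" "R `` {p i} = R `` {p j}"
    unfolding inj_def by (metis linorder_neqE_nat)
  have "(p i, p i) \<in> R" "(p j, p j) \<in> R"
    using V_delta_refl[OF R(1)] assms(2) by auto
  then have "(p i, p j) \<in> R" "(p j, p i) \<in> R"
    using ij(2) by blast+
  then show thesis
    using that ij(1) R(2) by blast
qed

(* The last clause pigeonholes the finitely many images of a basic entourage inside U: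
   the points a n with the same image as a n0 can be paired with b n0 and vice versa. *)
lemma V_delta_near_sequence:
  assumes "\<delta> A B" "U \<in> V_delta X \<delta>"
    and N: "\<And>i. U_N X (N i) \<in> V_delta X \<delta>" and M: "U_N X M \<in> V_delta X \<delta>"
  obtains a b :: "nat \<Rightarrow> 'a" and n0 where "\<And>n. a n \<in> A" "\<And>n. b n \<in> B" "\<And>n. (a n, b n) \<in> U"
    "\<And>m n. m \<le> n \<Longrightarrow> a n \<in> N m \<Longrightarrow> b n \<in> N m" "\<And>n. a n \<in> M \<Longrightarrow> b n \<in> M"
    "\<And>k. \<exists>n\<ge>k. (a n, b n0) \<in> U \<and> (a n0, b n) \<in> U"
proof -
  obtain R where R: "R \<in> V_delta X \<delta>" "R \<subseteq> U" "finite ((\<lambda>x. R `` {x}) ` X)"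
    using \<open>U \<in> V_delta X \<delta>\<close> by (rule V_delta_finite_Images)
  define E where "E n = R \<inter> U_N X M \<inter> (\<Inter>m\<le>n. U_N X (N m))" for n
  have "E n \<in> V_delta X \<delta>" for n
  proof (induction n)
    case 0
    show ?case
      using V_delta_Int[OF V_delta_Int[OF R(1) M] N] by (simp add: E_def)
  next
    case (Suc n)
    have "E (Suc n) = E n \<inter> U_N X (N (Suc n))"
      by (auto simp: E_def atMost_Suc)
    then show ?case
      using V_delta_Int[OF Suc N] by simp
  qed
  then have "\<forall>n. \<exists>x y. (x, y) \<in> (A \<times> B) \<inter> E n"
    using V_delta_meets_near[OF \<open>\<delta> A B\<close>] by blast
  then obtain a b where ab: "\<And>n. (a n, b n) \<in> (A \<times> B) \<inter> E n"
    by metis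
  have R_ab: "(a n, b n) \<in> R" for n
    using ab by (simp add: E_def)
  have "finite ((\<lambda>n. R `` {a n}) ` UNIV)"
    using R(3) by (rule finite_subset[rotated]) (use R_ab R(1) V_delta_subset in blast)
  then obtain n0 where "infinite {n. R `` {a n} = R `` {a n0}}"
    using pigeonhole_infinite[of "UNIV :: nat set"] by auto
  then have "\<exists>n\<ge>k. (a n, b n0) \<in> U \<and> (a n0, b n) \<in> U" for k
    unfolding infinite_nat_iff_unbounded_le using R_ab R(2) by blast
  moreover have "m \<le> n \<Longrightarrow> a n \<in> N m \<Longrightarrow> b n \<in> N m" "a n \<in> M \<Longrightarrow> b n \<in> M" for m n
    using ab[of n] by (auto simp: E_def U_N_def)
  ultimately show thesis
    using that ab R_ab R(2) by blast
qed

end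

section \<open>V_delta is the coarsest element of pi(delta)\<close>

context
  fixes X :: "'a set" and \<U> :: "('a \<times> 'a) set set"
  assumes qu: "quasi_uniformity X \<U>"
begin

lemmas qu_axioms = qu[unfolded quasi_uniformity_def]

lemma qu_subset: "U \<in> \<U> \<Longrightarrow> U \<subseteq> X \<times> X"
  using qu_axioms[THEN conjunct2, THEN conjunct1] by blast

lemma qu_refl: "U \<in> \<U> \<Longrightarrow> Id_on X \<subseteq> U"
  using qu_axioms[THEN conjunct2, THEN conjunct1] by blast

lemma qu_mono: "U \<in> \<U> \<Longrightarrow> U \<subseteq> W \<Longrightarrow> W \<subseteq> X \<times> X \<Longrightarrow> W \<in> \<U>"
  using qu_axioms[THEN conjunct2, THEN conjunct2, THEN conjunct1] by blast

lemma qu_Int: "U \<in> \<U> \<Longrightarrow> W \<in> \<U> \<Longrightarrow> U \<inter> W \<in> \<U>"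
  using qu_axioms[THEN conjunct2, THEN conjunct2, THEN conjunct2, THEN conjunct1] by blast

lemma qu_top: "X \<times> X \<in> \<U>"
proof -
  obtain U where "U \<in> \<U>"
    using qu_axioms[THEN conjunct1] by blast
  then show ?thesis
    using qu_subset qu_mono by blast
qed

lemma S_ent_Inter_in_qu:
  assumes "finite F" "F \<subseteq> far_pairs X (qu_proximity X \<U>)"
  shows "S_ent_Inter X F \<in> \<U>"
  using assms
proof (induction F rule: finite_induct)
  case empty
  show ?case
    using qu_top by (simp add: S_ent_Inter_def)
next
  case (insert p F)
  obtain A B where p: "p = (A, B)" by (cases p)
  then have "A \<subseteq> X" "B \<subseteq> X" "\<not> qu_proximity X \<U> A B"
    using insert.prems by auto
  then obtain U where U: "U \<in> \<U>" "(A \<times> B) \<inter> U = {}"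
    unfolding qu_proximity_def by blast
  have "S_ent_Inter X F \<inter> U \<subseteq> S_ent_Inter X (insert p F)"
    using U(2) by (auto simp: mem_S_ent_Inter p disjoint_iff)
  moreover have "S_ent_Inter X F \<inter> U \<in> \<U>"
    using insert.IH insert.prems U(1) qu_Int by blast
  ultimately show ?case
    using qu_mono S_ent_Inter_subset by blast
qed

lemma V_delta_subset_qu: "V_delta X (qu_proximity X \<U>) \<subseteq> \<U>"
proof
  fix U assume "U \<in> V_delta X (qu_proximity X \<U>)"
  then obtain F where "finite F" "F \<subseteq> far_pairs X (qu_proximity X \<U>)"
    "S_ent_Inter X F \<subseteq> U" "U \<subseteq> X \<times> X"
    unfolding V_delta_iff by blast
  then show "U \<in> \<U>"
    using S_ent_Inter_in_qu qu_mono by blast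
qed

end

section \<open>Strictly monotone chains of up-sets\<close>

lemma infinite_family_chain_or_antichain:
  fixes \<S> :: "'a set set"
  assumes "infinite \<S>"
  obtains (increasing) g :: "nat \<Rightarrow> 'a set" where "range g \<subseteq> \<S>" "\<And>m n. m < n \<Longrightarrow> g m \<subset> g n"
  | (decreasing) g :: "nat \<Rightarrow> 'a set" where "range g \<subseteq> \<S>" "\<And>m n. m < n \<Longrightarrow> g n \<subset> g m"
  | (antichain) g :: "nat \<Rightarrow> 'a set" where "range g \<subseteq> \<S>" "\<And>m n. m \<noteq> n \<Longrightarrow> \<not> g m \<subseteq> g n"
proof -
  obtain f :: "nat \<Rightarrow> 'a set" where f: "inj f" "range f \<subseteq> \<S>"
    using assms infinite_countable_subset by blast
  define colour where "colour e =
    (if f (Min e) \<subseteq> f (Max e) then 0 else if f (Max e) \<subseteq> f (Min e) then 1 else (2::nat))" for e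
  have "\<exists>Y t. Y \<subseteq> UNIV \<and> infinite Y \<and> t < 3 \<and> (\<forall>i\<in>Y. \<forall>j\<in>Y. i \<noteq> j \<longrightarrow> colour {i, j} = t)"
    by (rule Ramsey2) (auto simp: colour_def)
  then obtain Y t where Y: "infinite Y" "t < 3" and mono: "\<forall>i\<in>Y. \<forall>j\<in>Y. i \<noteq> j \<longrightarrow> colour {i, j} = t"
    by blast
  define g where "g = f \<circ> enumerate Y"
  have "range g \<subseteq> \<S>"
    using f(2) by (auto simp: g_def)
  have colour_g: "colour {enumerate Y m, enumerate Y n} = t" if "m < n" for m n
    using mono enumerate_in_set[OF Y(1)] enumerate_mono[OF that Y(1)] by (metis less_irrefl)
  have g_neq: "g m \<noteq> g n" if "m < n" for m n
    using injD[OF f(1)] enumerate_mono[OF that Y(1)] unfolding g_def o_def by (metis less_irrefl)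
  have g_colour: "(if g m \<subseteq> g n then 0 else if g n \<subseteq> g m then 1 else 2) = t" if "m < n" for m n
  proof -
    have "Min {enumerate Y m, enumerate Y n} = enumerate Y m" "Max {enumerate Y m, enumerate Y n} = enumerate Y n"
      using enumerate_mono[OF that Y(1)] by auto
    then show ?thesis
      using colour_g[OF that] by (simp only: colour_def g_def o_def)
  qed
  consider "t = 0" | "t = 1" | "t = 2"
    using Y(2) by linarith
  then show thesis
  proof cases
    case 1
    then have "g m \<subset> g n" if "m < n" for m n
      using g_colour[OF that] g_neq[OF that] by (cases "g m \<subseteq> g n"; cases "g n \<subseteq> g m") auto
    then show thesis
      by (rule increasing[OF \<open>range g \<subseteq> \<S>\<close>])
  next
    case 2
    then have "g n \<subset> g m" if "m < n" for m n
      using g_colour[OF that] g_neq[OF that] by (cases "g m \<subseteq> g n"; cases "g n \<subseteq> g m") auto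
    then show thesis
      by (rule decreasing[OF \<open>range g \<subseteq> \<S>\<close>])
  next
    case 3
    then have "\<not> g m \<subseteq> g n \<and> \<not> g n \<subseteq> g m" if "m < n" for m n
      using g_colour[OF that] by (cases "g m \<subseteq> g n"; cases "g n \<subseteq> g m") auto
    then have "\<not> g m \<subseteq> g n" if "m \<noteq> n" for m n
      using that by (meson linorder_neqE_nat)
    then show thesis
      by (rule antichain[OF \<open>range g \<subseteq> \<S>\<close>])
  qed
qed

lemma Union_principal_antichain_strict:
  assumes "Id_on X \<subseteq> R" "trans R" "\<And>i. x i \<in> X"
    and antichain: "\<And>m n. m \<noteq> n \<Longrightarrow> \<not> R `` {x m} \<subseteq> R `` {x n}"
  shows "(\<Union>m\<le>k. R `` {x m}) \<subset> (\<Union>m\<le>Suc k. R `` {x m})"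
proof -
  have "x (Suc k) \<notin> (\<Union>m\<le>k. R `` {x m})"
  proof
    assume "x (Suc k) \<in> (\<Union>m\<le>k. R `` {x m})"
    then obtain m where "m \<le> k" "(x m, x (Suc k)) \<in> R"
      by blast
    then have "R `` {x (Suc k)} \<subseteq> R `` {x m}"
      using \<open>trans R\<close> by (auto dest: transD)
    then show False
      using antichain[of "Suc k" m] \<open>m \<le> k\<close> by simp
  qed
  moreover have "x (Suc k) \<in> R `` {x (Suc k)}"
    using assms(1,3) by (auto simp: Id_on_def)
  ultimately show ?thesis
    by (auto simp: atMost_Suc)
qed

lemma preorder_monotone_upsets:
  assumes refl: "Id_on X \<subseteq> R" and R: "R \<subseteq> X \<times> X" and "trans R"
    and "infinite ((\<lambda>x. R `` {x}) ` X)"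
  obtains N :: "nat \<Rightarrow> 'a set"
  where "\<And>i. N i \<subseteq> X" "\<And>i. R `` N i \<subseteq> N i" "(\<forall>i. N i \<subset> N (Suc i)) \<or> (\<forall>i. N (Suc i) \<subset> N i)"
proof -
  have principal: "S \<subseteq> X \<and> R `` S \<subseteq> S" if "S \<in> (\<lambda>x. R `` {x}) ` X" for S
    using that R \<open>trans R\<close> by (auto dest: transD)
  show thesis
    using \<open>infinite _\<close>
  proof (cases rule: infinite_family_chain_or_antichain)
    case (increasing g)
    show thesis
    proof (rule that)
      show "g i \<subseteq> X" "R `` g i \<subseteq> g i" for i
        using principal[OF range_subsetD[OF increasing(1)]] by blast+
      show "(\<forall>i. g i \<subset> g (Suc i)) \<or> (\<forall>i. g (Suc i) \<subset> g i)"
        using increasing(2) by simp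
    qed
  next
    case (decreasing g)
    show thesis
    proof (rule that)
      show "g i \<subseteq> X" "R `` g i \<subseteq> g i" for i
        using principal[OF range_subsetD[OF decreasing(1)]] by blast+
      show "(\<forall>i. g i \<subset> g (Suc i)) \<or> (\<forall>i. g (Suc i) \<subset> g i)"
        using decreasing(2) by simp
    qed
  next
    case (antichain g)
    have "\<forall>i. \<exists>y. y \<in> X \<and> g i = R `` {y}"
      using antichain(1) by blast
    then obtain x where x: "\<And>i. x i \<in> X" "\<And>i. g i = R `` {x i}"
      by metis
    define N where "N k = (\<Union>m\<le>k. g m)" for k
    have "\<not> R `` {x m} \<subseteq> R `` {x n}" if "m \<noteq> n" for m n
      using antichain(2)[OF that] unfolding x(2) .
    then have "N k \<subset> N (Suc k)" for k
      unfolding N_def x(2) by (rule Union_principal_antichain_strict[OF refl \<open>trans R\<close> x(1)])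
    show thesis
    proof (rule that)
      show "N k \<subseteq> X" "R `` N k \<subseteq> N k" for k
        using principal[OF range_subsetD[OF antichain(1)]] unfolding N_def by blast+
      show "(\<forall>i. N i \<subset> N (Suc i)) \<or> (\<forall>i. N (Suc i) \<subset> N i)"
        using \<open>\<And>k. N k \<subset> N (Suc k)\<close> by blast
    qed
  qed
qed

section \<open>Chains in the l-base from a finer transitive quasi-uniformity\<close>

lemma far_complement_if_closed_under_qu:
  assumes "\<V> \<in> qu_pi X \<delta>" "R \<in> \<V>" "C \<subseteq> X" "R `` C \<subseteq> C"
  shows "\<not> \<delta> C (X - C)"
proof -
  have "(C \<times> (X - C)) \<inter> R = {}"
    using assms(4) by blast
  then show ?thesis
    using assms(1,2) unfolding qu_pi_def qu_proximity_def by blast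
qed

lemma lbase_if_closed_under_qu_T:
  assumes "\<V> \<in> qu_pi (topspace T) \<delta> \<inter> qu_T T" "R \<in> \<V>" "C \<subseteq> topspace T" "R `` C \<subseteq> C"
  shows "C \<in> lbase T (V_delta (topspace T) \<delta>)"
proof -
  have "qu_compatible T \<V>"
    using assms(1) unfolding qu_T_def by blast
  moreover have "\<forall>x\<in>C. R `` {x} \<subseteq> C"
    using assms(4) by blast
  ultimately have "openin T C"
    using assms(2,3) unfolding qu_compatible_def by blast
  moreover have "\<not> \<delta> C (topspace T - C)"
    using assms far_complement_if_closed_under_qu by blast
  ultimately show ?thesis
    using U_N_in_V_delta assms(3) unfolding lbase_def by blast
qed

lemma monotone_lbase_chain_if_finer_transitive:
  fixes T :: "'a topology"
  defines "X \<equiv> topspace T"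
  assumes "\<V> \<in> qu_pi X \<delta> \<inter> qu_T T" "\<V> \<noteq> V_delta X \<delta>"
  obtains (increasing) N :: "nat \<Rightarrow> 'a set" where "\<forall>i. N i \<in> lbase T (V_delta X \<delta>)"
      "\<forall>i. N i \<subset> N (Suc i)" "(\<Union>i. N i) \<in> lbase T (V_delta X \<delta>)"
  | (decreasing) N :: "nat \<Rightarrow> 'a set" where "\<forall>i. N i \<in> lbase T (V_delta X \<delta>)"
      "\<forall>i. N (Suc i) \<subset> N i" "(\<Inter>i. N i) \<in> lbase T (V_delta X \<delta>)"
proof -
  have qu: "quasi_uniformity X \<V>" and pr: "qu_proximity X \<V> = \<delta>" and "qu_transitive \<V>"
    using assms(2) unfolding qu_pi_def qu_T_def by auto
  have "V_delta X \<delta> \<subseteq> \<V>"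
    using V_delta_subset_qu[OF qu] pr by simp
  then obtain U where "U \<in> \<V>" "U \<notin> V_delta X \<delta>"
    using assms(3) by blast
  then obtain R where R: "R \<in> \<V>" "trans R" "R \<subseteq> U"
    using \<open>qu_transitive \<V>\<close> unfolding qu_transitive_def by blast
  have "R \<notin> V_delta X \<delta>"
    using \<open>U \<notin> V_delta X \<delta>\<close> V_delta_mono R(3) qu_subset[OF qu \<open>U \<in> \<V>\<close>] by blast
  have R_X: "R \<subseteq> X \<times> X" and R_refl: "Id_on X \<subseteq> R"
    using qu_subset[OF qu R(1)] qu_refl[OF qu R(1)] .
  have closed_lbase: "C \<in> lbase T (V_delta X \<delta>)" if "C \<subseteq> X" "R `` C \<subseteq> C" for C
    using lbase_if_closed_under_qu_T assms(2) R(1) that unfolding X_def by blast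
  \<comment> \<open>finitely many R-images would put R into the totally bounded V_delta\<close>
  have "infinite ((\<lambda>x. R `` {x}) ` X)"
  proof
    assume "finite ((\<lambda>x. R `` {x}) ` X)"
    moreover have "\<not> \<delta> (R `` {x}) (X - R `` {x})" for x
      using far_complement_if_closed_under_qu[of \<V> X \<delta> R "R `` {x}"] assms(2) R R_X
      by (auto dest: transD)
    ultimately have "R \<in> V_delta X \<delta>"
      using in_V_delta_if_finite_Images R_refl R_X by blast
    then show False
      using \<open>R \<notin> V_delta X \<delta>\<close> by blast
  qed
  then obtain N where N: "\<And>i. N i \<subseteq> X" "\<And>i. R `` N i \<subseteq> N i"
    and mono: "(\<forall>i. N i \<subset> N (Suc i)) \<or> (\<forall>i. N (Suc i) \<subset> N i)"
    using preorder_monotone_upsets[OF R_refl R_X R(2)] by metis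
  have lbase_N: "\<forall>i. N i \<in> lbase T (V_delta X \<delta>)"
    using closed_lbase N by simp
  have "(\<Union>i. N i) \<in> lbase T (V_delta X \<delta>)" "(\<Inter>i. N i) \<in> lbase T (V_delta X \<delta>)"
    using N by (intro closed_lbase; fastforce)+
  with mono lbase_N show thesis
    using increasing decreasing by auto
qed

section \<open>Refining V_delta by a preorder\<close>

definition V_delta_refined :: "'a set \<Rightarrow> ('a set \<Rightarrow> 'a set \<Rightarrow> bool) \<Rightarrow> ('a \<times> 'a) set \<Rightarrow> ('a \<times> 'a) set set" where
  "V_delta_refined X \<delta> W = {U. U \<subseteq> X \<times> X \<and> (\<exists>U0\<in>V_delta X \<delta>. U0 \<inter> W \<subseteq> U)}"

lemma V_delta_subset_refined: "V_delta X \<delta> \<subseteq> V_delta_refined X \<delta> W"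
  unfolding V_delta_refined_def using V_delta_subset by blast

lemma in_V_delta_refined: "W \<subseteq> X \<times> X \<Longrightarrow> W \<in> V_delta_refined X \<delta> W"
  unfolding V_delta_refined_def using V_delta_top by blast

lemma qu_transitive_V_delta_refined:
  assumes "qu_transitive (V_delta X \<delta>)" "trans W"
  shows "qu_transitive (V_delta_refined X \<delta> W)"
  unfolding qu_transitive_def
proof
  fix U assume "U \<in> V_delta_refined X \<delta> W"
  then obtain U0 where U0: "U0 \<in> V_delta X \<delta>" "U0 \<inter> W \<subseteq> U"
    unfolding V_delta_refined_def by blast
  then obtain R where R: "R \<in> V_delta X \<delta>" "trans R" "R \<subseteq> U0"
    using assms(1) unfolding qu_transitive_def by blast
  have "R \<inter> W \<in> V_delta_refined X \<delta> W"
    using R(1) V_delta_subset[OF R(1)] unfolding V_delta_refined_def by blast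
  moreover have "trans (R \<inter> W)"
    using R(2) assms(2) by (rule trans_Int)
  ultimately show "\<exists>V\<in>V_delta_refined X \<delta> W. trans V \<and> V \<subseteq> U"
    using R(3) U0(2) by blast
qed

lemma quasi_uniformity_V_delta_refined:
  assumes "quasi_proximity X \<delta>" "qu_transitive (V_delta X \<delta>)" "trans W" "Id_on X \<subseteq> W"
  shows "quasi_uniformity X (V_delta_refined X \<delta> W)"
  unfolding quasi_uniformity_def
proof (intro conjI ballI allI impI)
  show "V_delta_refined X \<delta> W \<noteq> {}"
    using V_delta_subset_refined V_delta_top by blast
next
  fix U assume "U \<in> V_delta_refined X \<delta> W"
  then obtain U0 where "U0 \<in> V_delta X \<delta>" "U0 \<inter> W \<subseteq> U" "U \<subseteq> X \<times> X"
    unfolding V_delta_refined_def by blast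
  moreover have "Id_on X \<subseteq> U0"
    using V_delta_refl[OF assms(1) \<open>U0 \<in> V_delta X \<delta>\<close>] .
  ultimately show "U \<subseteq> X \<times> X" "Id_on X \<subseteq> U"
    using assms(4) by blast+
next
  fix U U' assume "U \<in> V_delta_refined X \<delta> W \<and> U \<subseteq> U' \<and> U' \<subseteq> X \<times> X"
  then show "U' \<in> V_delta_refined X \<delta> W"
    unfolding V_delta_refined_def by blast
next
  fix U U' assume "U \<in> V_delta_refined X \<delta> W" "U' \<in> V_delta_refined X \<delta> W"
  then obtain U0 U0' where "U0 \<in> V_delta X \<delta>" "U0 \<inter> W \<subseteq> U" "U0' \<in> V_delta X \<delta>" "U0' \<inter> W \<subseteq> U'"
    "U \<subseteq> X \<times> X"
    unfolding V_delta_refined_def by blast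
  then show "U \<inter> U' \<in> V_delta_refined X \<delta> W"
    unfolding V_delta_refined_def using V_delta_Int[of U0 X \<delta> U0'] by blast
next
  fix U assume "U \<in> V_delta_refined X \<delta> W"
  then obtain V where "V \<in> V_delta_refined X \<delta> W" "trans V" "V \<subseteq> U"
    using qu_transitive_V_delta_refined[OF assms(2,3)] unfolding qu_transitive_def by blast
  then show "\<exists>V\<in>V_delta_refined X \<delta> W. V O V \<subseteq> U"
    by (auto dest: transD)
qed

lemma far_complement_Image_V_delta_refined:
  fixes T :: "'a topology"
  defines "X \<equiv> topspace T"
  assumes qp: "quasi_proximity X \<delta>" and "qp_compatible T \<delta>"
    and "U \<in> V_delta_refined X \<delta> W" "openin T H" "x \<in> H" "H \<subseteq> W `` {x}"
  shows "\<not> \<delta> {x} (X - U `` {x})"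
proof -
  obtain U0 where U0: "U0 \<in> V_delta X \<delta>" "U0 \<inter> W \<subseteq> U"
    using assms(4) unfolding V_delta_refined_def by blast
  have "x \<in> X"
    using openin_subset[OF \<open>openin T H\<close>] \<open>x \<in> H\<close> unfolding X_def by blast
  have "X - U `` {x} \<subseteq> (X - H) \<union> (X - U0 `` {x})"
    using U0(2) \<open>H \<subseteq> W `` {x}\<close> by blast
  moreover have "\<not> \<delta> {x} (X - H)"
    using assms(3,5,6) unfolding qp_compatible_def X_def by blast
  moreover have "\<not> \<delta> {x} (X - U0 `` {x})"
    using far_complement_Image_V_delta[OF qp U0(1)] .
  ultimately show ?thesis
    using qp_Un_right[OF qp, of "{x}" "X - H" "X - U0 `` {x}"] qp_mono[OF qp, of "{x}" "X - U `` {x}"]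
      \<open>x \<in> X\<close> by blast
qed

lemma qu_compatible_V_delta_refined:
  fixes T :: "'a topology"
  defines "X \<equiv> topspace T"
  assumes qp: "quasi_proximity X \<delta>" and compatible: "qp_compatible T \<delta>"
    and nhds: "\<And>x. x \<in> X \<Longrightarrow> \<exists>H. openin T H \<and> x \<in> H \<and> H \<subseteq> W `` {x}"
  shows "qu_compatible T (V_delta_refined X \<delta> W)"
proof -
  have open_iff: "openin T G \<longleftrightarrow> G \<subseteq> X \<and> (\<forall>x\<in>G. \<not> \<delta> {x} (X - G))" for G
    using compatible unfolding qp_compatible_def X_def by blast
  have "openin T G \<longleftrightarrow> G \<subseteq> X \<and> (\<forall>x\<in>G. \<exists>U\<in>V_delta_refined X \<delta> W. U `` {x} \<subseteq> G)" for G
  proof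
    assume "openin T G"
    then have "G \<subseteq> X" and far: "\<And>x. x \<in> G \<Longrightarrow> \<not> \<delta> {x} (X - G)"
      using open_iff by auto
    have "S_ent_Inter X {({x}, X - G)} \<in> V_delta_refined X \<delta> W" if "x \<in> G" for x
      using far[OF that] that \<open>G \<subseteq> X\<close>
      by (auto intro!: V_delta_subset_refined[THEN subsetD] S_ent_Inter_in_V_delta)
    moreover have "S_ent_Inter X {({x}, X - G)} `` {x} \<subseteq> G" for x
      by (auto simp: mem_S_ent_Inter)
    ultimately show "G \<subseteq> X \<and> (\<forall>x\<in>G. \<exists>U\<in>V_delta_refined X \<delta> W. U `` {x} \<subseteq> G)"
      using \<open>G \<subseteq> X\<close> by blast
  next
    assume "G \<subseteq> X \<and> (\<forall>x\<in>G. \<exists>U\<in>V_delta_refined X \<delta> W. U `` {x} \<subseteq> G)"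
    then have "G \<subseteq> X" and G_img: "\<forall>x\<in>G. \<exists>U\<in>V_delta_refined X \<delta> W. U `` {x} \<subseteq> G"
      by auto
    have "\<not> \<delta> {x} (X - G)" if "x \<in> G" for x
    proof -
      obtain U where "U \<in> V_delta_refined X \<delta> W" "U `` {x} \<subseteq> G"
        using G_img \<open>x \<in> G\<close> by blast
      moreover obtain H where "openin T H" "x \<in> H" "H \<subseteq> W `` {x}"
        using nhds \<open>G \<subseteq> X\<close> \<open>x \<in> G\<close> by blast
      ultimately have "\<not> \<delta> {x} (X - U `` {x})"
        using far_complement_Image_V_delta_refined[OF qp[unfolded X_def] compatible] unfolding X_def by blast
      then show ?thesis
        using qp_mono[OF qp, of "{x}" "X - G" "{x}" "X - U `` {x}"] \<open>U `` {x} \<subseteq> G\<close>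
          \<open>G \<subseteq> X\<close> \<open>x \<in> G\<close> by blast
    qed
    then show "openin T G"
      using open_iff \<open>G \<subseteq> X\<close> by blast
  qed
  then show ?thesis
    unfolding qu_compatible_def X_def by blast
qed

lemma qu_proximity_V_delta_refined:
  assumes qp: "quasi_proximity X \<delta>"
    and near: "\<And>A B U. \<delta> A B \<Longrightarrow> U \<in> V_delta X \<delta> \<Longrightarrow> (A \<times> B) \<inter> U \<inter> W \<noteq> {}"
  shows "qu_proximity X (V_delta_refined X \<delta> W) = \<delta>"
proof (intro ext iffI)
  fix A B assume prox: "qu_proximity X (V_delta_refined X \<delta> W) A B"
  show "\<delta> A B"
  proof (rule ccontr)
    assume "\<not> \<delta> A B"
    moreover have "A \<subseteq> X" "B \<subseteq> X"
      using prox unfolding qu_proximity_def by blast+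
    ultimately have "S_ent_Inter X {(A, B)} \<in> V_delta_refined X \<delta> W"
      by (auto intro!: V_delta_subset_refined[THEN subsetD] S_ent_Inter_in_V_delta)
    moreover have "(A \<times> B) \<inter> S_ent_Inter X {(A, B)} = {}"
      by (auto simp: mem_S_ent_Inter)
    ultimately show False
      using prox unfolding qu_proximity_def by blast
  qed
next
  fix A B assume "\<delta> A B"
  then have "(A \<times> B) \<inter> U \<noteq> {}" if "U \<in> V_delta_refined X \<delta> W" for U
    using near that unfolding V_delta_refined_def by blast
  then show "qu_proximity X (V_delta_refined X \<delta> W) A B"
    using qp_subset[OF qp \<open>\<delta> A B\<close>] unfolding qu_proximity_def by blast
qed

lemma exists_finer_transitive_if_preorder:
  fixes T :: "'a topology"
  defines "X \<equiv> topspace T"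
  assumes qp: "quasi_proximity X \<delta>" and "qp_compatible T \<delta>" and "qu_transitive (V_delta X \<delta>)"
    and W: "trans W" "Id_on X \<subseteq> W" "W \<subseteq> X \<times> X" "W \<notin> V_delta X \<delta>"
    and nhds: "\<And>x. x \<in> X \<Longrightarrow> \<exists>H. openin T H \<and> x \<in> H \<and> H \<subseteq> W `` {x}"
    and near: "\<And>A B U. \<delta> A B \<Longrightarrow> U \<in> V_delta X \<delta> \<Longrightarrow> (A \<times> B) \<inter> U \<inter> W \<noteq> {}"
  shows "\<exists>\<V>. \<V> \<in> qu_pi X \<delta> \<inter> qu_T T \<and> \<V> \<noteq> V_delta X \<delta>"
proof (intro exI conjI)
  show "V_delta_refined X \<delta> W \<in> qu_pi X \<delta> \<inter> qu_T T"
    using quasi_uniformity_V_delta_refined[OF qp assms(4) W(1,2)]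
      qu_proximity_V_delta_refined[OF qp near] qu_transitive_V_delta_refined[OF assms(4) W(1)]
      qu_compatible_V_delta_refined[OF qp[unfolded X_def] assms(3) nhds[unfolded X_def]]
    unfolding qu_pi_def qu_T_def X_def by blast
  show "V_delta_refined X \<delta> W \<noteq> V_delta X \<delta>"
    using in_V_delta_refined[OF W(3)] W(4) by blast
qed

section \<open>The preorder of a monotone chain\<close>

(* chain_preorder X N = (X \<times> X) \<inter> (\<Inter>i. U_N X (N i)) *)
definition chain_preorder :: "'a set \<Rightarrow> (nat \<Rightarrow> 'a set) \<Rightarrow> ('a \<times> 'a) set" where
  "chain_preorder X N = {(a, c). a \<in> X \<and> c \<in> X \<and> (\<forall>i. a \<in> N i \<longrightarrow> c \<in> N i)}"

lemma mem_chain_preorder: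
  "(a, c) \<in> chain_preorder X N \<longleftrightarrow> a \<in> X \<and> c \<in> X \<and> (\<forall>i. a \<in> N i \<longrightarrow> c \<in> N i)"
  by (simp add: chain_preorder_def)

lemma chain_preorder_meets:
  assumes "U \<subseteq> X \<times> X" "x \<in> A" "y \<in> B" "(x, y) \<in> U" "\<And>i. x \<in> N i \<Longrightarrow> y \<in> N i"
  shows "(A \<times> B) \<inter> U \<inter> chain_preorder X N \<noteq> {}"
proof -
  have "(x, y) \<in> chain_preorder X N"
    using assms(1,4,5) by (auto simp: mem_chain_preorder)
  then show ?thesis
    using assms(2-4) by blast
qed

lemma chain_preorder_preorder:
  "trans (chain_preorder X N)" "Id_on X \<subseteq> chain_preorder X N" "chain_preorder X N \<subseteq> X \<times> X"
  by (auto simp: trans_def mem_chain_preorder chain_preorder_def)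

lemma chain_preorder_nhds_mono:
  assumes "mono N" "\<And>i. openin T (N i)" "x \<in> topspace T"
  shows "\<exists>H. openin T H \<and> x \<in> H \<and> H \<subseteq> chain_preorder (topspace T) N `` {x}"
proof (cases "\<exists>i. x \<in> N i")
  case True
  define k where "k = (LEAST i. x \<in> N i)"
  have "x \<in> N k"
    unfolding k_def using True by (rule LeastI_ex)
  moreover have "N k \<subseteq> N i" if "x \<in> N i" for i
    using monoD[OF assms(1) Least_le[of "\<lambda>i. x \<in> N i", OF that]] by (simp add: k_def)
  ultimately have "N k \<subseteq> chain_preorder (topspace T) N `` {x}"
    using assms(3) openin_subset[OF assms(2)] unfolding chain_preorder_def by blast
  then show ?thesis
    using assms(2) \<open>x \<in> N k\<close> by blast
next
  case False
  then show ?thesis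
    using assms(3) by (intro exI[of _ "topspace T"]) (auto simp: mem_chain_preorder)
qed

lemma chain_preorder_not_in_V_delta_increasing:
  assumes qp: "quasi_proximity X \<delta>" and "\<And>i. N i \<subset> N (Suc i)" "\<And>i. N i \<subseteq> X"
  shows "chain_preorder X N \<notin> V_delta X \<delta>"
proof
  assume "chain_preorder X N \<in> V_delta X \<delta>"
  have "\<forall>i. \<exists>y. y \<in> N (Suc i) - N i"
    using assms(2) by blast
  then obtain p where p: "\<And>i. p i \<in> N (Suc i) - N i"
    by metis
  then have "\<And>i. p i \<in> X"
    using assms(3) by blast
  then obtain i j where "i < j" "(p i, p j) \<in> chain_preorder X N"
    using V_delta_identifies_two[OF qp \<open>chain_preorder X N \<in> V_delta X \<delta>\<close>] by blast
  then have "p j \<in> N j"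
    using p[of i] monoD[OF iffD2[OF mono_iff_le_Suc], of N "Suc i" j] assms(2)
    by (auto simp: mem_chain_preorder)
  then show False
    using p[of j] by blast
qed

lemma chain_preorder_near_increasing:
  assumes qp: "quasi_proximity X \<delta>" and "mono N"
    and N: "\<And>i. U_N X (N i) \<in> V_delta X \<delta>" and M: "U_N X (\<Union>i. N i) \<in> V_delta X \<delta>"
    and "\<delta> A B" "U \<in> V_delta X \<delta>"
  shows "(A \<times> B) \<inter> U \<inter> chain_preorder X N \<noteq> {}"
proof -
  obtain a b n0 where ab: "\<And>n. a n \<in> A" "\<And>n. b n \<in> B" "\<And>n. (a n, b n) \<in> U"
    "\<And>m n. m \<le> n \<Longrightarrow> a n \<in> N m \<Longrightarrow> b n \<in> N m" "\<And>n. a n \<in> (\<Union>i. N i) \<Longrightarrow> b n \<in> (\<Union>i. N i)"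
    and far_n: "\<And>k. \<exists>n\<ge>k. (a n, b n0) \<in> U \<and> (a n0, b n) \<in> U"
    by (rule V_delta_near_sequence[where N = N, OF qp \<open>\<delta> A B\<close> \<open>U \<in> V_delta X \<delta>\<close> N M]) blast
  note witness = chain_preorder_meets[OF V_delta_subset[OF \<open>U \<in> V_delta X \<delta>\<close>]]
  show ?thesis
  proof (cases "\<exists>i. a n0 \<in> N i")
    case False
    then show ?thesis
      by (intro witness[OF ab(1-3)]) blast
  next
    case True
    then obtain k where "b n0 \<in> N k"
      using ab(5) by blast
    obtain n where "n \<ge> k" "(a n, b n0) \<in> U"
      using far_n by blast
    show ?thesis
    proof (cases "\<exists>i\<le>n. a n \<in> N i")
      case True
      then obtain i where "i \<le> n" "a n \<in> N i"
        by blast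
      \<comment> \<open>N (min i j) is N i or N j, so it contains a n whenever N j does\<close>
      have "b n \<in> N j" if "a n \<in> N j" for j
        using ab(4)[of "min i j" n] \<open>i \<le> n\<close> \<open>a n \<in> N i\<close> that monoD[OF \<open>mono N\<close>, of "min i j" j]
        by (cases "i \<le> j") (auto simp: min_def)
      then show ?thesis
        by (rule witness[OF ab(1-3)])
    next
      case False
      have "b n0 \<in> N j" if "a n \<in> N j" for j
        using False that \<open>n \<ge> k\<close> \<open>b n0 \<in> N k\<close> monoD[OF \<open>mono N\<close>, of k j] by force
      then show ?thesis
        by (rule witness[OF ab(1,2) \<open>(a n, b n0) \<in> U\<close>])
    qed
  qed
qed

lemma chain_preorder_nhds_antimono:
  assumes "antimono N" "\<And>i. openin T (N i)" "openin T (\<Inter>i. N i)" "x \<in> topspace T"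
  shows "\<exists>H. openin T H \<and> x \<in> H \<and> H \<subseteq> chain_preorder (topspace T) N `` {x}"
proof -
  have "\<exists>H. openin T H \<and> x \<in> H \<and> (\<forall>i. x \<in> N i \<longrightarrow> H \<subseteq> N i)"
  proof (cases "\<forall>i. x \<in> N i")
    case True
    then show ?thesis
      using assms(3) by blast
  next
    case False
    then obtain n where "x \<notin> N n"
      by blast
    show ?thesis
    proof (cases "x \<in> N 0")
      case True
      then obtain k where k: "\<forall>i\<le>k. x \<in> N i" "x \<notin> N (Suc k)"
        using ex_least_nat_less[of "\<lambda>i. x \<notin> N i", OF \<open>x \<notin> N n\<close>] by blast
      have "N k \<subseteq> N i" if "x \<in> N i" for i
      proof -
        have "i \<le> k"
        proof (rule ccontr)
          assume "\<not> i \<le> k"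
          then have "N i \<subseteq> N (Suc k)"
            using antimonoD[OF assms(1)] by simp
          then show False
            using k(2) that by blast
        qed
        then show ?thesis
          using antimonoD[OF assms(1)] by blast
      qed
      then show ?thesis
        using k(1) assms(2) by blast
    next
      case False
      then have "x \<notin> N i" for i
        using antimonoD[OF assms(1), of 0 i] by blast
      then show ?thesis
        using assms(4) by blast
    qed
  qed
  then obtain H where H: "openin T H" "x \<in> H" "\<forall>i. x \<in> N i \<longrightarrow> H \<subseteq> N i"
    by blast
  have "H \<subseteq> chain_preorder (topspace T) N `` {x}"
    using H(3) openin_subset[OF H(1)] assms(4) by (auto simp: mem_chain_preorder subset_iff)
  then show ?thesis
    using H(1,2) by blast
qed

lemma chain_preorder_not_in_V_delta_decreasing:
  assumes qp: "quasi_proximity X \<delta>" and "\<And>i. N (Suc i) \<subset> N i" "\<And>i. N i \<subseteq> X"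
  shows "chain_preorder X N \<notin> V_delta X \<delta>"
proof
  assume "chain_preorder X N \<in> V_delta X \<delta>"
  have "\<forall>i. \<exists>y. y \<in> N i - N (Suc i)"
    using assms(2) by blast
  then obtain p where p: "\<And>i. p i \<in> N i - N (Suc i)"
    by metis
  then have "\<And>i. p i \<in> X"
    using assms(3) by blast
  then obtain i j where "i < j" "(p j, p i) \<in> chain_preorder X N"
    using V_delta_identifies_two[OF qp \<open>chain_preorder X N \<in> V_delta X \<delta>\<close>] by blast
  then have "p i \<in> N (Suc i)"
    using p[of j] antimonoD[OF iffD2[OF antimono_iff_le_Suc], of N "Suc i" j] assms(2)
    by (auto simp: mem_chain_preorder)
  then show False
    using p[of i] by blast
qed

lemma chain_preorder_near_decreasing:
  assumes qp: "quasi_proximity X \<delta>" and "antimono N"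
    and N: "\<And>i. U_N X (N i) \<in> V_delta X \<delta>" and M: "U_N X (\<Inter>i. N i) \<in> V_delta X \<delta>"
    and "\<delta> A B" "U \<in> V_delta X \<delta>"
  shows "(A \<times> B) \<inter> U \<inter> chain_preorder X N \<noteq> {}"
proof -
  obtain a b n0 where ab: "\<And>n. a n \<in> A" "\<And>n. b n \<in> B" "\<And>n. (a n, b n) \<in> U"
    "\<And>m n. m \<le> n \<Longrightarrow> a n \<in> N m \<Longrightarrow> b n \<in> N m" "\<And>n. a n \<in> (\<Inter>i. N i) \<Longrightarrow> b n \<in> (\<Inter>i. N i)"
    and far_n: "\<And>k. \<exists>n\<ge>k. (a n, b n0) \<in> U \<and> (a n0, b n) \<in> U"
    by (rule V_delta_near_sequence[where N = N, OF qp \<open>\<delta> A B\<close> \<open>U \<in> V_delta X \<delta>\<close> N M]) blast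
  note witness = chain_preorder_meets[OF V_delta_subset[OF \<open>U \<in> V_delta X \<delta>\<close>]]
  have below: "i < k" if "x \<in> N i" "x \<notin> N k" for x i k
    using that antimonoD[OF \<open>antimono N\<close>, of k i] by (meson not_le subsetD)
  show ?thesis
  proof (cases "\<forall>i. a n0 \<in> N i")
    case True
    then have "b n0 \<in> N i" for i
      using ab(5)[of n0] by blast
    then show ?thesis
      by (intro witness[OF ab(1-3)[of n0]])
  next
    case False
    then obtain k where "a n0 \<notin> N k"
      by blast
    obtain n where "n \<ge> k" "(a n0, b n) \<in> U"
      using far_n by blast
    show ?thesis
    proof (cases "a n \<in> N n")
      case True
      have "b n \<in> N j" if "a n0 \<in> N j" for j
        using ab(4)[OF order_refl True] below[OF that \<open>a n0 \<notin> N k\<close>] \<open>n \<ge> k\<close>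
          antimonoD[OF \<open>antimono N\<close>, of j n] by auto
      then show ?thesis
        by (rule witness[OF ab(1,2) \<open>(a n0, b n) \<in> U\<close>])
    next
      case False
      have "b n \<in> N j" if "a n \<in> N j" for j
        using ab(4) below[OF that False] that by simp
      then show ?thesis
        by (rule witness[OF ab(1-3)])
    qed
  qed
qed

lemma exists_finer_transitive_if_increasing_chain:
  fixes T :: "'a topology"
  defines "X \<equiv> topspace T"
  assumes "quasi_proximity X \<delta>" "qp_compatible T \<delta>" "qu_transitive (V_delta X \<delta>)"
    and N: "\<forall>i. N i \<in> lbase T (V_delta X \<delta>)" "\<forall>i. N i \<subset> N (Suc i)"
    and M: "(\<Union>i. N i) \<in> lbase T (V_delta X \<delta>)"
  shows "\<exists>\<V>. \<V> \<in> qu_pi X \<delta> \<inter> qu_T T \<and> \<V> \<noteq> V_delta X \<delta>"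
proof (rule exists_finer_transitive_if_preorder[OF assms(2-4)[unfolded X_def] chain_preorder_preorder,
      folded X_def])
  have "mono N"
    using N(2) by (simp add: mono_iff_le_Suc less_imp_le)
  show "chain_preorder X N \<notin> V_delta X \<delta>"
    using chain_preorder_not_in_V_delta_increasing[OF assms(2)] N openin_subset
    unfolding lbase_def X_def by blast
  show "\<exists>H. openin T H \<and> x \<in> H \<and> H \<subseteq> chain_preorder X N `` {x}" if "x \<in> X" for x
    using chain_preorder_nhds_mono[OF \<open>mono N\<close>] N(1) that unfolding lbase_def X_def by blast
  show "(A \<times> B) \<inter> U \<inter> chain_preorder X N \<noteq> {}" if "\<delta> A B" "U \<in> V_delta X \<delta>" for A B U
    using chain_preorder_near_increasing[OF assms(2) \<open>mono N\<close> _ _ that] N(1) M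
    unfolding lbase_def X_def by blast
qed

lemma exists_finer_transitive_if_decreasing_chain:
  fixes T :: "'a topology"
  defines "X \<equiv> topspace T"
  assumes "quasi_proximity X \<delta>" "qp_compatible T \<delta>" "qu_transitive (V_delta X \<delta>)"
    and N: "\<forall>i. N i \<in> lbase T (V_delta X \<delta>)" "\<forall>i. N (Suc i) \<subset> N i"
    and M: "(\<Inter>i. N i) \<in> lbase T (V_delta X \<delta>)"
  shows "\<exists>\<V>. \<V> \<in> qu_pi X \<delta> \<inter> qu_T T \<and> \<V> \<noteq> V_delta X \<delta>"
proof (rule exists_finer_transitive_if_preorder[OF assms(2-4)[unfolded X_def] chain_preorder_preorder,
      folded X_def])
  have "antimono N"
    using N(2) by (simp add: antimono_iff_le_Suc less_imp_le)
  show "chain_preorder X N \<notin> V_delta X \<delta>"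
    using chain_preorder_not_in_V_delta_decreasing[OF assms(2)] N openin_subset
    unfolding lbase_def X_def by blast
  show "\<exists>H. openin T H \<and> x \<in> H \<and> H \<subseteq> chain_preorder X N `` {x}" if "x \<in> X" for x
    using chain_preorder_nhds_antimono[OF \<open>antimono N\<close>] N(1) M that unfolding lbase_def X_def by blast
  show "(A \<times> B) \<inter> U \<inter> chain_preorder X N \<noteq> {}" if "\<delta> A B" "U \<in> V_delta X \<delta>" for A B U
    using chain_preorder_near_decreasing[OF assms(2) \<open>antimono N\<close> _ _ that] N(1) M
    unfolding lbase_def X_def by blast
qed

theorem theorem2p6:
  fixes T :: "'a topology" and \<delta> :: "'a set \<Rightarrow> 'a set \<Rightarrow> bool"
  assumes "quasi_proximity (topspace T) \<delta>"
    and "qp_compatible T \<delta>"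
    and "qu_transitive (V_delta (topspace T) \<delta>)"
  shows "(\<exists>\<V>. \<V> \<in> qu_pi (topspace T) \<delta> \<inter> qu_T T \<and> \<V> \<noteq> V_delta (topspace T) \<delta>) \<longleftrightarrow>
    ((\<exists>N :: nat \<Rightarrow> 'a set. (\<forall>i. N i \<in> lbase T (V_delta (topspace T) \<delta>)) \<and>
        (\<forall>i. N i \<subset> N (Suc i)) \<and> (\<Union>i. N i) \<in> lbase T (V_delta (topspace T) \<delta>)) \<or>
     (\<exists>N :: nat \<Rightarrow> 'a set. (\<forall>i. N i \<in> lbase T (V_delta (topspace T) \<delta>)) \<and>
        (\<forall>i. N (Suc i) \<subset> N i) \<and> (\<Inter>i. N i) \<in> lbase T (V_delta (topspace T) \<delta>)))"
    (is "?finer \<longleftrightarrow> ?increasing \<or> ?decreasing")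
proof
  assume ?finer
  then obtain \<V> where "\<V> \<in> qu_pi (topspace T) \<delta> \<inter> qu_T T" "\<V> \<noteq> V_delta (topspace T) \<delta>"
    by blast
  then show "?increasing \<or> ?decreasing"
    by (cases rule: monotone_lbase_chain_if_finer_transitive) blast+
next
  assume "?increasing \<or> ?decreasing"
  then show ?finer
    using exists_finer_transitive_if_increasing_chain[OF assms]
      exists_finer_transitive_if_decreasing_chain[OF assms]
    by blast
qed

end
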